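(* Let $\Gamma,\Delta$ be finitely generated groups with free continuous actions on compact metric spaces $Y$ and $X$ respectively, and let $f:Y\to X$ be a map inducing a coarse embedding of warped cones, i.e. there are an index set $I$, a map $i\mapsto t_i$ from $I$ onto $(0,\infty)$, a map $i\mapsto\tau_i\in(0,\infty)$, and non-decreasing functions $\sigma_\pm:[0,\infty)\to[0,\infty)$ tending to infinity with $\sigma_-(d_\Gamma(y,y'))\le d_\Delta(f(y),f(y'))\le\sigma_+(d_\Gamma(y,y'))$ on $(t_iY,d_\Gamma)\to(\tau_iX,d_\Delta)$ for all $i$. Then there is a cocycle $\delta:\Gamma\times Y\to\Delta$ (i.e. $\delta(\gamma_2,\gamma_1y)\delta(\gamma_1,y)=\delta(\gamma_2\gamma_1,y)$), continuous if $f$ is continuous, and non-decreasing functions $\rho_\pm:[0,\infty)\to[0,\infty)$ tending to infinity such that $\rho_-(|\gamma|)\le|\delta(\gamma,y)|\le\rho_+(|\gamma|)$ for all $\gamma\in\Gamma$, $y\in Y$. In particular, $\Gamma$ embeds coarsely into $\Delta$.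
   Context: $|\cdot|$ is word length with respect to fixed finite symmetric generating sets. For a compact metric space $(Y,d)$ with a $\Gamma$-action and $t>0$, $tY$ is $Y$ with metric $td$ and $d_\Gamma$ is the largest metric on $tY$ with $d_\Gamma\le td$ and $d_\Gamma(y,sy)\le1$ for generators $s$. *)

theory Defs
  imports "HOL-Analysis.Analysis" "HOL-Algebra.Group_Action" "HOL-Algebra.Generated_Groups"
begin

definition fg_group :: "'g monoid \<Rightarrow> 'g set \<Rightarrow> bool" where
  "fg_group G S \<longleftrightarrow> group G \<and> finite S \<and> S \<subseteq> carrier G \<and>
     (\<forall>s\<in>S. inv\<^bsub>G\<^esub> s \<in> S) \<and> generate G S = carrier G"

definition word_length :: "'g monoid \<Rightarrow> 'g set \<Rightarrow> 'g \<Rightarrow> nat" where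
  "word_length G S g = (LEAST n. \<exists>xs. set xs \<subseteq> S \<and> length xs = n \<and>
      foldr (\<lambda>x y. x \<otimes>\<^bsub>G\<^esub> y) xs \<one>\<^bsub>G\<^esub> = g)"

definition free_continuous_action :: "'g monoid \<Rightarrow> ('g \<Rightarrow> 'y::metric_space \<Rightarrow> 'y) \<Rightarrow> bool" where
  "free_continuous_action G act \<longleftrightarrow> group_action G UNIV act \<and>
     (\<forall>g\<in>carrier G. continuous_on UNIV (act g)) \<and>
     (\<forall>g\<in>carrier G. \<forall>y. act g y = y \<longrightarrow> g = \<one>\<^bsub>G\<^esub>)"

definition is_metric :: "('a \<Rightarrow> 'a \<Rightarrow> real) \<Rightarrow> bool" where
  "is_metric m \<longleftrightarrow> (\<forall>x y. m x y = 0 \<longleftrightarrow> x = y) \<and> (\<forall>x y. m x y = m y x) \<and>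
     (\<forall>x y z. m x z \<le> m x y + m y z)"

definition warped_dist :: "'g set \<Rightarrow> ('g \<Rightarrow> 'y::metric_space \<Rightarrow> 'y) \<Rightarrow> real \<Rightarrow> 'y \<Rightarrow> 'y \<Rightarrow> real" where
  "warped_dist S act t y y' = Sup {m y y' | m. is_metric m \<and>
      (\<forall>a b. m a b \<le> t * dist a b) \<and> (\<forall>a. \<forall>s\<in>S. m a (act s a) \<le> 1)}"

definition control_fun :: "(real \<Rightarrow> real) \<Rightarrow> bool" where
  "control_fun \<rho> \<longleftrightarrow> mono_on {0..} \<rho> \<and> (\<forall>x\<ge>0. \<rho> x \<ge> 0) \<and> filterlim \<rho> at_top at_top"

definition cocycle :: "'g monoid \<Rightarrow> 'h monoid \<Rightarrow> ('g \<Rightarrow> 'y \<Rightarrow> 'y) \<Rightarrow> ('g \<Rightarrow> 'y \<Rightarrow> 'h) \<Rightarrow> bool" where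
  "cocycle G H act \<delta> \<longleftrightarrow> (\<forall>g\<in>carrier G. \<forall>y. \<delta> g y \<in> carrier H) \<and>
     (\<forall>g1\<in>carrier G. \<forall>g2\<in>carrier G. \<forall>y.
        \<delta> g2 (act g1 y) \<otimes>\<^bsub>H\<^esub> \<delta> g1 y = \<delta> (g2 \<otimes>\<^bsub>G\<^esub> g1) y)"

definition coarse_embedding :: "'g monoid \<Rightarrow> 'g set \<Rightarrow> 'h monoid \<Rightarrow> 'h set \<Rightarrow> ('g \<Rightarrow> 'h) \<Rightarrow> bool" where
  "coarse_embedding G S H T \<phi> \<longleftrightarrow> \<phi> \<in> carrier G \<rightarrow> carrier H \<and>
     (\<exists>\<rho>m \<rho>p. control_fun \<rho>m \<and> control_fun \<rho>p \<and>
       (\<forall>g\<in>carrier G. \<forall>h\<in>carrier G.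
          \<rho>m (real (word_length G S (inv\<^bsub>G\<^esub> g \<otimes>\<^bsub>G\<^esub> h)))
            \<le> real (word_length H T (inv\<^bsub>H\<^esub> \<phi> g \<otimes>\<^bsub>H\<^esub> \<phi> h)) \<and>
          real (word_length H T (inv\<^bsub>H\<^esub> \<phi> g \<otimes>\<^bsub>H\<^esub> \<phi> h))
            \<le> \<rho>p (real (word_length G S (inv\<^bsub>G\<^esub> g \<otimes>\<^bsub>G\<^esub> h)))))"

end

theory Submission
  imports Defs
begin

text \<open>
  The warped metric is the infimum of \<open>n + t e\<close> over chains from \<open>y\<close> to \<open>y'\<close> made of \<open>n\<close>
  generator jumps and of small moves of total length \<open>e\<close>. If this infimum stays below \<open>C\<close> for
  arbitrarily large \<open>t\<close>, then the moves become arbitrarily short, and uniform continuity of the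
  generators on the compact space shows that \<open>y'\<close> is the image of \<open>y\<close> under a word of length at
  most \<open>C\<close>; by freeness this word has a well-defined value. Since \<open>f\<close> is bounded on the warped
  metrics and the scales \<open>\<tau>\<^sub>i\<close> are unbounded (for infinite \<open>\<Gamma>\<close>, as \<open>X\<close> is bounded), this
  yields \<open>f(\<gamma> y) = \<delta>(\<gamma>, y) f(y)\<close> with \<open>|\<delta>(\<gamma>, y)| \<le> \<sigma>\<^sub>+(|\<gamma>|)\<close>; freeness of the \<open>\<Delta>\<close>-action makes
  \<open>\<delta>\<close> a cocycle, the same argument for \<open>\<sigma>\<^sub>-\<close> bounds \<open>|\<gamma>|\<close> in terms of \<open>|\<delta>(\<gamma>, y)|\<close>, and
  \<open>\<delta>(\<gamma>, -)\<close> is locally constant when \<open>f\<close> is continuous because it takes values in a finite set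
  of elements that act differently at every point.
\<close>

inductive warp_chain :: "'g set \<Rightarrow> ('g \<Rightarrow> 'a::metric_space \<Rightarrow> 'a) \<Rightarrow> 'a \<Rightarrow> 'a \<Rightarrow> nat \<Rightarrow> real \<Rightarrow> bool"
  for S act a where
  chain_refl: "warp_chain S act a a 0 0"
| chain_move: "warp_chain S act a b n e \<Longrightarrow> warp_chain S act a b' n (e + dist b b')"
| chain_jump: "warp_chain S act a b n e \<Longrightarrow> s \<in> S \<Longrightarrow> warp_chain S act a (act s b) (Suc n) e"

definition chain_dist :: "'g set \<Rightarrow> ('g \<Rightarrow> 'a::metric_space \<Rightarrow> 'a) \<Rightarrow> real \<Rightarrow> 'a \<Rightarrow> 'a \<Rightarrow> real" where
  "chain_dist S act t a b = Inf {real n + t * e | n e. warp_chain S act a b n e}"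

lemma warp_chain_nonneg: "warp_chain S act a b n e \<Longrightarrow> 0 \<le> e"
  by (induction rule: warp_chain.induct) auto

lemma warp_chain_move_only: "warp_chain S act a b 0 (dist a b)"
  using chain_move[OF chain_refl, of S act a b] by simp

lemma warp_chain_trans:
  "warp_chain S act b c n2 e2 \<Longrightarrow> warp_chain S act a b n1 e1 \<Longrightarrow>
   warp_chain S act a c (n1 + n2) (e1 + e2)"
proof (induction rule: warp_chain.induct)
  case chain_refl
  then show ?case by simp
next
  case (chain_move b' n e b'')
  then have "warp_chain S act a b'' (n1 + n) ((e1 + e) + dist b' b'')"
    by (intro warp_chain.chain_move) auto
  then show ?case by (simp add: add.assoc)
next
  case (chain_jump b' n e s)
  then show ?case using warp_chain.chain_jump[of S act a b' "n1 + n" "e1 + e" s] by simp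
qed

lemma warp_chain_no_jump_dist_le: "warp_chain S act a b n e \<Longrightarrow> n = 0 \<Longrightarrow> dist a b \<le> e"
proof (induction rule: warp_chain.induct)
  case (chain_move b n e b')
  then show ?case using dist_triangle[of a b' b] by (simp add: dist_commute)
qed auto

lemma warp_chain_last_jump:
  "warp_chain S act a b m e \<Longrightarrow> m = Suc n \<Longrightarrow>
   \<exists>c s e'. warp_chain S act a c n e' \<and> s \<in> S \<and> e' + dist (act s c) b \<le> e"
proof (induction rule: warp_chain.induct)
  case (chain_move b m e b')
  then obtain c s e' where "warp_chain S act a c n e'" "s \<in> S" "e' + dist (act s c) b \<le> e"
    by blast
  moreover have "dist (act s c) b' \<le> dist (act s c) b + dist b b'" by (rule dist_triangle)
  ultimately show ?case by (intro exI[of _ c] exI[of _ s] exI[of _ e']) auto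
next
  case (chain_jump b m e s)
  then show ?case by (intro exI[of _ b] exI[of _ s] exI[of _ e]) auto
qed auto

lemma warp_chain_cost_lower:
  "warp_chain S act a b n e \<Longrightarrow> 0 < t \<Longrightarrow> min 1 (t * dist a b) \<le> real n + t * e"
proof (induction rule: warp_chain.induct)
  case (chain_move b n e b')
  have "t * dist a b' \<le> t * dist a b + t * dist b b'"
    using dist_triangle[of a b' b] chain_move(3) by (simp add: dist_commute distrib_left[symmetric])
  moreover have "0 \<le> t * dist b b'" using chain_move(3) by simp
  ultimately have "min 1 (t * dist a b') \<le> min 1 (t * dist a b) + t * dist b b'"
    by (simp add: min_def)
  then show ?case using chain_move by (simp add: distrib_left)
next
  case (chain_jump b n e s)
  have "0 \<le> t * e" using chain_jump(4) warp_chain_nonneg[OF chain_jump(1)] by simp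
  then show ?case by (simp add: min_def)
qed simp

lemma warp_chain_cost_ge_metric:
  assumes "warp_chain S act a b n e" and "is_metric m"
    and "\<forall>x y. m x y \<le> t * dist x y" and "\<forall>x. \<forall>s\<in>S. m x (act s x) \<le> 1"
  shows "m a b \<le> real n + t * e"
  using assms(1)
proof (induction rule: warp_chain.induct)
  case chain_refl
  have "m a a = 0" using assms(2) unfolding is_metric_def by blast
  then show ?case by simp
next
  case (chain_move b n e b')
  have "m a b' \<le> m a b + m b b'" using assms(2) unfolding is_metric_def by blast
  also have "m b b' \<le> t * dist b b'" using assms(3) by blast
  finally show ?case using chain_move by (simp add: distrib_left)
next
  case (chain_jump b n e s)
  have "m a (act s b) \<le> m a b + m b (act s b)" using assms(2) unfolding is_metric_def by blast
  also have "m b (act s b) \<le> 1" using assms(4) chain_jump by blast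
  finally show ?case using chain_jump by simp
qed

lemma chain_dist_le: "warp_chain S act a b n e \<Longrightarrow> 0 \<le> t \<Longrightarrow> chain_dist S act t a b \<le> real n + t * e"
  unfolding chain_dist_def
  by (rule cInf_lower) (auto intro!: bdd_belowI[of _ 0] dest: warp_chain_nonneg)

lemma chain_dist_lessE:
  assumes "chain_dist S act t a b < C"
  obtains n e where "warp_chain S act a b n e" and "real n + t * e < C"
proof -
  have "{real n + t * e | n e. warp_chain S act a b n e} \<noteq> {}"
    using warp_chain_move_only[of S act a b] by blast
  from cInf_lessD[OF this assms[unfolded chain_dist_def]] show ?thesis using that by blast
qed

lemma chain_dist_greatest:
  "(\<And>n e. warp_chain S act a b n e \<Longrightarrow> C \<le> real n + t * e) \<Longrightarrow> C \<le> chain_dist S act t a b"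
  unfolding chain_dist_def using warp_chain_move_only[of S act a b]
  by (intro cInf_greatest) auto

lemma chain_dist_nonneg: "0 \<le> t \<Longrightarrow> 0 \<le> chain_dist S act t a b"
  by (rule chain_dist_greatest) (auto dest: warp_chain_nonneg)

lemma chain_dist_self: "0 \<le> t \<Longrightarrow> chain_dist S act t a a = 0"
  using chain_dist_le[OF chain_refl, of t S act a] chain_dist_nonneg[of t S act a a] by simp

lemma chain_dist_triangle:
  assumes "0 \<le> t"
  shows "chain_dist S act t a c \<le> chain_dist S act t a b + chain_dist S act t b c"
proof -
  have "chain_dist S act t a c - chain_dist S act t a b \<le> chain_dist S act t b c"
  proof (rule chain_dist_greatest)
    fix n2 e2 assume bc: "warp_chain S act b c n2 e2"
    have "chain_dist S act t a c - (real n2 + t * e2) \<le> chain_dist S act t a b"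
    proof (rule chain_dist_greatest)
      fix n1 e1 assume ab: "warp_chain S act a b n1 e1"
      have "chain_dist S act t a c \<le> real (n1 + n2) + t * (e1 + e2)"
        using chain_dist_le[OF warp_chain_trans[OF bc ab] assms] .
      then show "chain_dist S act t a c - (real n2 + t * e2) \<le> real n1 + t * e1"
        by (simp add: distrib_left)
    qed
    then show "chain_dist S act t a c - chain_dist S act t a b \<le> real n2 + t * e2" by simp
  qed
  then show ?thesis by simp
qed

lemma chain_dist_eq_0_imp_eq:
  assumes "0 < t" and "chain_dist S act t a b = 0"
  shows "a = b"
proof (rule ccontr)
  assume "a \<noteq> b"
  then have "0 < t * dist a b" using assms(1) by simp
  moreover have "min 1 (t * dist a b) \<le> chain_dist S act t a b"
    using assms(1) by (intro chain_dist_greatest warp_chain_cost_lower)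
  ultimately show False using assms(2) by (simp add: min_def split: if_splits)
qed

lemma chain_dist_le_dist: "0 \<le> t \<Longrightarrow> chain_dist S act t a b \<le> t * dist a b"
  using chain_dist_le[OF warp_chain_move_only] by simp

lemma chain_dist_generator_le: "0 \<le> t \<Longrightarrow> s \<in> S \<Longrightarrow> chain_dist S act t a (act s a) \<le> 1"
  using chain_dist_le[OF chain_jump[OF chain_refl]] by fastforce

lemma finite_common_positive_bound:
  assumes "finite A" and "\<forall>a\<in>A. \<exists>\<eta>>0. P a \<eta>"
    and "\<And>a \<eta> \<eta>'. P a \<eta> \<Longrightarrow> 0 < \<eta>' \<Longrightarrow> \<eta>' \<le> \<eta> \<Longrightarrow> P a \<eta>'"
  shows "\<exists>\<eta>::real. 0 < \<eta> \<and> (\<forall>a\<in>A. P a \<eta>)"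
  using assms(1,2)
proof (induction rule: finite_induct)
  case empty
  then show ?case by (intro exI[of _ 1]) auto
next
  case (insert a A)
  then obtain \<eta>1 \<eta>2 where "0 < \<eta>1" "\<forall>b\<in>A. P b \<eta>1" "0 < \<eta>2" "P a \<eta>2" by auto
  then show ?case by (intro exI[of _ "min \<eta>1 \<eta>2"]) (auto intro: assms(3))
qed

locale fg_free_action =
  fixes G :: "'g monoid" (structure) and S :: "'g set" and act :: "'g \<Rightarrow> 'a::metric_space \<Rightarrow> 'a"
  assumes fg_group: "fg_group G S" and compact_space: "compact (UNIV :: 'a set)"
    and free_action: "free_continuous_action G act"
begin

sublocale group G using fg_group by (simp add: fg_group_def)

lemma group_action: "group_action G UNIV act"
  using free_action by (simp add: free_continuous_action_def)

lemma generators_subset: "S \<subseteq> carrier G"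
  and finite_generators: "finite S"
  and inv_generator: "s \<in> S \<Longrightarrow> inv s \<in> S"
  and generate_generators: "generate G S = carrier G"
  using fg_group by (auto simp: fg_group_def)

lemma continuous_on_act: "g \<in> carrier G \<Longrightarrow> continuous_on UNIV (act g)"
  using free_action by (simp add: free_continuous_action_def)

lemma act_one: "act \<one> x = x"
  using fun_cong[OF group_action.id_eq_one[OF group_action], of x] by simp

lemma act_mult: "g \<in> carrier G \<Longrightarrow> h \<in> carrier G \<Longrightarrow> act (g \<otimes> h) x = act g (act h x)"
  using group_action.composition_rule[OF group_action] by simp

lemma act_inv_act: "g \<in> carrier G \<Longrightarrow> act (inv g) (act g x) = x"
  using group_action.orbit_sym_aux[OF group_action] by simp

lemma act_eq_imp_eq:
  assumes g: "g \<in> carrier G" and h: "h \<in> carrier G" and "act g x = act h x"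
  shows "g = h"
proof -
  have "act (inv h \<otimes> g) x = x" using assms by (simp add: act_mult act_inv_act)
  then have "inv h \<otimes> g = \<one>"
    using free_action g h unfolding free_continuous_action_def by blast
  then show "g = h" using g h by (metis inv_equality inv_inv l_inv_ex inv_closed)
qed

definition word_prod :: "'g list \<Rightarrow> 'g" where
  "word_prod xs = foldr (\<lambda>x y. x \<otimes> y) xs \<one>"

lemma word_prod_simps [simp]: "word_prod [] = \<one>" "word_prod (x # xs) = x \<otimes> word_prod xs"
  by (simp_all add: word_prod_def)

lemma word_prod_closed: "set xs \<subseteq> S \<Longrightarrow> word_prod xs \<in> carrier G"
  using generators_subset by (induction xs) auto

lemma word_prod_append:
  "set xs \<subseteq> S \<Longrightarrow> set ys \<subseteq> S \<Longrightarrow> word_prod (xs @ ys) = word_prod xs \<otimes> word_prod ys"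
  using generators_subset by (induction xs) (auto simp: m_assoc word_prod_closed)

lemma exists_word: "g \<in> carrier G \<Longrightarrow> \<exists>xs. set xs \<subseteq> S \<and> word_prod xs = g"
  unfolding generate_generators[symmetric]
proof (induction rule: generate.induct)
  case one
  then show ?case by (intro exI[of _ "[]"]) simp
next
  case (incl h)
  then show ?case using generators_subset by (intro exI[of _ "[h]"]) auto
next
  case (inv h)
  then show ?case using generators_subset inv_generator by (intro exI[of _ "[inv h]"]) auto
next
  case (eng h1 h2)
  then obtain xs ys where "set xs \<subseteq> S" "word_prod xs = h1" "set ys \<subseteq> S" "word_prod ys = h2"
    by blast
  then show ?case by (intro exI[of _ "xs @ ys"]) (simp add: word_prod_append)
qed

lemma word_length_eq_Least:
  "word_length G S g = (LEAST n. \<exists>xs. set xs \<subseteq> S \<and> length xs = n \<and> word_prod xs = g)"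
  unfolding word_length_def word_prod_def ..

lemma word_length_word_prod_le: "set xs \<subseteq> S \<Longrightarrow> word_length G S (word_prod xs) \<le> length xs"
  unfolding word_length_eq_Least by (rule Least_le) auto

lemma word_length_one: "word_length G S \<one> = 0"
  using word_length_word_prod_le[of "[]"] by simp

lemma exists_shortest_word:
  assumes "g \<in> carrier G"
  obtains xs where "set xs \<subseteq> S" "length xs = word_length G S g" "word_prod xs = g"
proof -
  have "\<exists>n xs. set xs \<subseteq> S \<and> length xs = n \<and> word_prod xs = g"
    using exists_word[OF assms] by blast
  from LeastI_ex[OF this] show ?thesis using that unfolding word_length_eq_Least by blast
qed

lemma finite_word_length_le: "finite {g \<in> carrier G. word_length G S g \<le> N}"
proof -
  have "{g \<in> carrier G. word_length G S g \<le> N} \<subseteq> word_prod ` {xs. set xs \<subseteq> S \<and> length xs \<le> N}"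
  proof
    fix g assume "g \<in> {g \<in> carrier G. word_length G S g \<le> N}"
    then have g: "g \<in> carrier G" "word_length G S g \<le> N" by auto
    obtain xs where "set xs \<subseteq> S" "length xs = word_length G S g" "word_prod xs = g"
      using exists_shortest_word[OF g(1)] .
    then show "g \<in> word_prod ` {xs. set xs \<subseteq> S \<and> length xs \<le> N}" using g by force
  qed
  moreover have "finite {xs. set xs \<subseteq> S \<and> length xs \<le> N}"
    using finite_lists_length_le[OF finite_generators] by simp
  ultimately show ?thesis using finite_subset by blast
qed

lemma infinite_imp_word_length_unbounded:
  assumes "infinite (carrier G)"
  obtains g where "g \<in> carrier G" "r < real (word_length G S g)"
proof -
  have "\<not> carrier G \<subseteq> {g \<in> carrier G. word_length G S g \<le> nat \<lceil>r\<rceil>}"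
    using finite_word_length_le assms finite_subset by blast
  then show ?thesis using that by (force simp: not_less le_nat_iff le_ceiling_iff)
qed

lemma warp_chain_word: "set xs \<subseteq> S \<Longrightarrow> warp_chain S act y (act (word_prod xs) y) (length xs) 0"
proof (induction xs)
  case Nil
  then show ?case by (simp add: act_one chain_refl)
next
  case (Cons s xs)
  then have "warp_chain S act y (act s (act (word_prod xs) y)) (Suc (length xs)) 0"
    by (intro chain_jump) auto
  moreover have "act (s \<otimes> word_prod xs) y = act s (act (word_prod xs) y)"
    using Cons generators_subset word_prod_closed by (intro act_mult) auto
  ultimately show ?case by simp
qed

lemma warp_chain_sym: "warp_chain S act a b n e \<Longrightarrow> warp_chain S act b a n e"
proof (induction rule: warp_chain.induct)
  case chain_refl
  then show ?case by (rule warp_chain.chain_refl)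
next
  case (chain_move b n e b')
  from warp_chain_trans[OF chain_move(2) warp_chain_move_only[of S act b' b]]
  show ?case by (simp add: dist_commute add.commute)
next
  case (chain_jump b n e s)
  have "warp_chain S act (act s b) (act (inv s) (act s b)) (Suc 0) 0"
    using inv_generator[OF chain_jump(2)] by (intro warp_chain.chain_jump[OF warp_chain.chain_refl])
  then have "warp_chain S act (act s b) b (Suc 0) 0"
    using act_inv_act generators_subset chain_jump(2) by auto
  from warp_chain_trans[OF chain_jump(3) this] show ?case by simp
qed

lemma chain_dist_sym: "chain_dist S act t a b = chain_dist S act t b a"
  unfolding chain_dist_def using warp_chain_sym by metis

lemma chain_dist_act_le_word_length:
  assumes "0 \<le> t" and "g \<in> carrier G"
  shows "chain_dist S act t y (act g y) \<le> word_length G S g"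
proof -
  obtain xs where "set xs \<subseteq> S" "length xs = word_length G S g" "word_prod xs = g"
    using exists_shortest_word[OF assms(2)] .
  with chain_dist_le[OF warp_chain_word assms(1)] show ?thesis by force
qed

lemma warped_dist_eq_chain_dist:
  assumes t: "0 < t"
  shows "warped_dist S act t a b = chain_dist S act t a b"
proof -
  let ?M = "{m a b | m. is_metric m \<and> (\<forall>a b. m a b \<le> t * dist a b) \<and>
                        (\<forall>a. \<forall>s\<in>S. m a (act s a) \<le> 1)}"
  have "is_metric (chain_dist S act t)"
    unfolding is_metric_def
    using t chain_dist_self chain_dist_eq_0_imp_eq chain_dist_sym chain_dist_triangle
    by (metis less_imp_le)
  moreover have "\<forall>a b. chain_dist S act t a b \<le> t * dist a b"
    using t by (intro allI chain_dist_le_dist less_imp_le)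
  moreover have "\<forall>a. \<forall>s\<in>S. chain_dist S act t a (act s a) \<le> 1"
    using t by (intro allI ballI chain_dist_generator_le less_imp_le)
  ultimately have max: "chain_dist S act t a b \<in> ?M"
    by (intro CollectI exI[of _ "chain_dist S act t"]) simp
  have upper: "x \<le> chain_dist S act t a b" if x: "x \<in> ?M" for x
  proof -
    obtain m where m: "x = m a b" "is_metric m" "\<forall>a b. m a b \<le> t * dist a b"
      "\<forall>a. \<forall>s\<in>S. m a (act s a) \<le> 1"
      using x by blast
    show ?thesis
      unfolding m(1) by (rule chain_dist_greatest, rule warp_chain_cost_ge_metric[OF _ m(2-4)])
  qed
  show ?thesis unfolding warped_dist_def by (rule cSup_eq_maximum[OF max upper])
qed

lemma uniformly_equicontinuous_generators:
  assumes "0 < \<epsilon>"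
  shows "\<exists>\<zeta>>0. \<forall>s\<in>S. \<forall>u v. dist u v < \<zeta> \<longrightarrow> dist (act s u) (act s v) < \<epsilon>"
proof -
  have "\<forall>s\<in>S. \<exists>\<zeta>>0. \<forall>u v. dist u v < \<zeta> \<longrightarrow> dist (act s u) (act s v) < \<epsilon>"
  proof
    fix s assume "s \<in> S"
    then have "uniformly_continuous_on UNIV (act s)"
      using continuous_on_act generators_subset compact_space
      by (intro compact_uniformly_continuous) auto
    then show "\<exists>\<zeta>>0. \<forall>u v. dist u v < \<zeta> \<longrightarrow> dist (act s u) (act s v) < \<epsilon>"
      unfolding uniformly_continuous_on_def using assms by (metis UNIV_I dist_commute)
  qed
  from finite_common_positive_bound[OF finite_generators this] show ?thesis by force
qed

lemma warp_chain_short_moves_imp_near_word: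
  assumes "0 < \<epsilon>"
  shows "\<exists>\<eta>>0. \<forall>x x' e. warp_chain S act x x' n e \<longrightarrow> e < \<eta> \<longrightarrow>
           (\<exists>xs. set xs \<subseteq> S \<and> length xs = n \<and> dist x' (act (word_prod xs) x) < \<epsilon>)"
  using assms
proof (induction n arbitrary: \<epsilon>)
  case 0
  show ?case
  proof (intro exI[of _ \<epsilon>] conjI allI impI)
    fix x x' e assume "warp_chain S act x x' 0 e" "e < \<epsilon>"
    then have "dist x x' < \<epsilon>" using warp_chain_no_jump_dist_le by fastforce
    then show "\<exists>xs. set xs \<subseteq> S \<and> length xs = 0 \<and> dist x' (act (word_prod xs) x) < \<epsilon>"
      by (intro exI[of _ "[]"]) (simp add: act_one dist_commute)
  qed (use 0 in auto)
next
  case (Suc n)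
  obtain \<zeta> where \<zeta>: "0 < \<zeta>" "\<forall>s\<in>S. \<forall>u v. dist u v < \<zeta> \<longrightarrow> dist (act s u) (act s v) < \<epsilon>/2"
    using uniformly_equicontinuous_generators[of "\<epsilon>/2"] Suc.prems by auto
  obtain \<eta> where \<eta>: "0 < \<eta>" "\<forall>x x' e. warp_chain S act x x' n e \<longrightarrow> e < \<eta> \<longrightarrow>
     (\<exists>xs. set xs \<subseteq> S \<and> length xs = n \<and> dist x' (act (word_prod xs) x) < \<zeta>)"
    using Suc.IH[OF \<zeta>(1)] by blast
  show ?case
  proof (intro exI[of _ "min \<eta> (\<epsilon>/2)"] conjI allI impI)
    show "0 < min \<eta> (\<epsilon>/2)" using \<eta> Suc.prems by simp
  next
    fix x x' e assume chain: "warp_chain S act x x' (Suc n) e" and "e < min \<eta> (\<epsilon>/2)"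
    then have e: "e < \<eta>" "e < \<epsilon>/2" by simp_all
    obtain c s e' where cs: "warp_chain S act x c n e'" "s \<in> S" "e' + dist (act s c) x' \<le> e"
      using warp_chain_last_jump[OF chain] by blast
    have "dist x' (act s c) \<le> e - e'" using cs(3) by (simp add: dist_commute)
    then have "e' < \<eta>" and last: "dist x' (act s c) < \<epsilon>/2"
      using warp_chain_nonneg[OF cs(1)] e zero_le_dist[of x' "act s c"] by linarith+
    then obtain xs where xs: "set xs \<subseteq> S" "length xs = n" "dist c (act (word_prod xs) x) < \<zeta>"
      using \<eta> cs(1) by blast
    have "act (word_prod (s # xs)) x = act s (act (word_prod xs) x)"
      using cs(2) generators_subset word_prod_closed[OF xs(1)] by (simp add: act_mult subset_iff)
    then have "dist x' (act (word_prod (s # xs)) x)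
               \<le> dist x' (act s c) + dist (act s c) (act s (act (word_prod xs) x))"
      by (simp add: dist_triangle)
    also have "\<dots> < \<epsilon>" using last \<zeta>(2) cs(2) xs(3) by fastforce
    finally show "\<exists>xs. set xs \<subseteq> S \<and> length xs = Suc n \<and> dist x' (act (word_prod xs) x) < \<epsilon>"
      using xs cs(2) by (intro exI[of _ "s # xs"]) auto
  qed
qed

lemma short_words_keep_distance:
  assumes "\<forall>xs. set xs \<subseteq> S \<and> length xs \<le> N \<longrightarrow> x' \<noteq> act (word_prod xs) x"
  obtains \<epsilon> where "0 < \<epsilon>"
    and "\<And>xs. set xs \<subseteq> S \<Longrightarrow> length xs \<le> N \<Longrightarrow> \<epsilon> \<le> dist x' (act (word_prod xs) x)"
proof -
  define Ws where "Ws = {xs. set xs \<subseteq> S \<and> length xs \<le> N}"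
  have "finite Ws" unfolding Ws_def using finite_lists_length_le[OF finite_generators] by simp
  define \<epsilon> where "\<epsilon> = Min ((\<lambda>xs. dist x' (act (word_prod xs) x)) ` Ws)"
  have "0 < dist x' (act (word_prod xs) x)" if "xs \<in> Ws" for xs
    using that assms unfolding Ws_def by auto
  moreover have "[] \<in> Ws" unfolding Ws_def by simp
  ultimately have "0 < \<epsilon>" unfolding \<epsilon>_def using \<open>finite Ws\<close> by (subst Min_gr_iff) auto
  moreover have "\<epsilon> \<le> dist x' (act (word_prod xs) x)" if "set xs \<subseteq> S" "length xs \<le> N" for xs
    unfolding \<epsilon>_def using \<open>finite Ws\<close> that by (simp add: Ws_def)
  ultimately show ?thesis by (rule that)
qed

text \<open>
  A cheap chain at a large scale \<open>t\<close> has few jumps and total move length below any given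
  \<open>\<eta>\<close>, so by the previous two lemmas it cannot end at a point that no short word reaches.
\<close>
lemma exact_word_of_chain_dist_bounded:
  assumes bounded: "\<forall>M. \<exists>t>M. chain_dist S act t x x' \<le> C"
  shows "\<exists>xs. set xs \<subseteq> S \<and> real (length xs) \<le> C \<and> x' = act (word_prod xs) x"
proof (rule ccontr)
  assume no_word: "\<not> ?thesis"
  obtain t0 where "0 < t0" "chain_dist S act t0 x x' \<le> C" using bounded by blast
  then have C: "0 \<le> C" using chain_dist_nonneg[of t0 S act x x'] by simp
  define N where "N = nat \<lfloor>C\<rfloor>"
  have "real n \<le> C \<longleftrightarrow> n \<le> N" for n unfolding N_def using C by linarith
  then have "\<forall>xs. set xs \<subseteq> S \<and> length xs \<le> N \<longrightarrow> x' \<noteq> act (word_prod xs) x"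
    using no_word by auto
  then obtain \<epsilon> where "0 < \<epsilon>"
    and \<epsilon>_le: "\<And>xs. set xs \<subseteq> S \<Longrightarrow> length xs \<le> N \<Longrightarrow> \<epsilon> \<le> dist x' (act (word_prod xs) x)"
    using short_words_keep_distance by metis
  have "\<forall>n\<in>{..N}. \<exists>\<eta>>0. \<forall>x x' e. warp_chain S act x x' n e \<longrightarrow> e < \<eta> \<longrightarrow>
     (\<exists>xs. set xs \<subseteq> S \<and> length xs = n \<and> dist x' (act (word_prod xs) x) < \<epsilon>)"
    using warp_chain_short_moves_imp_near_word[OF \<open>0 < \<epsilon>\<close>] by blast
  from finite_common_positive_bound[OF _ this]
  obtain \<eta> where \<eta>: "0 < \<eta>" "\<forall>n\<in>{..N}. \<forall>x x' e. warp_chain S act x x' n e \<longrightarrow> e < \<eta> \<longrightarrow>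
     (\<exists>xs. set xs \<subseteq> S \<and> length xs = n \<and> dist x' (act (word_prod xs) x) < \<epsilon>)"
    by force
  obtain t where t: "max 0 ((real N + 1) / \<eta>) < t" "chain_dist S act t x x' \<le> C"
    using bounded by blast
  have "C < real N + 1" unfolding N_def using C by linarith
  with t obtain n e where chain: "warp_chain S act x x' n e" "real n + t * e < real N + 1"
    by (metis chain_dist_lessE le_less_trans)
  have "0 \<le> t * e" using warp_chain_nonneg[OF chain(1)] t by simp
  then have "n \<le> N" using chain(2) by linarith
  have "t * e < t * \<eta>"
    using chain(2) \<open>0 \<le> t * e\<close> t \<eta>(1) by (simp add: field_simps)
  then have "e < \<eta>" using t by (simp add: mult_less_cancel_left)
  then obtain xs where "set xs \<subseteq> S" "length xs = n" "dist x' (act (word_prod xs) x) < \<epsilon>"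
    using \<eta>(2) \<open>n \<le> N\<close> chain(1) by blast
  then show False using \<epsilon>_le \<open>n \<le> N\<close> by force
qed

lemma word_length_le_of_chain_dist_bounded:
  assumes "g \<in> carrier G" and "\<forall>M. \<exists>t>M. chain_dist S act t y (act g y) \<le> C"
  shows "real (word_length G S g) \<le> C"
proof -
  obtain xs where xs: "set xs \<subseteq> S" "real (length xs) \<le> C" "act g y = act (word_prod xs) y"
    using exact_word_of_chain_dist_bounded[OF assms(2)] by blast
  then have "g = word_prod xs" using act_eq_imp_eq assms(1) word_prod_closed by blast
  then show ?thesis using word_length_word_prod_le[OF xs(1)] xs(2) by simp
qed

end

lemma control_fun_nonneg: "control_fun \<rho> \<Longrightarrow> 0 \<le> x \<Longrightarrow> 0 \<le> \<rho> x"
  by (simp add: control_fun_def)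

lemma control_fun_mono: "control_fun \<rho> \<Longrightarrow> 0 \<le> x \<Longrightarrow> x \<le> x' \<Longrightarrow> \<rho> x \<le> \<rho> x'"
  unfolding control_fun_def by (auto intro: mono_onD)

lemma control_fun_eventually_gt:
  assumes "control_fun \<rho>"
  obtains L where "\<And>x. L \<le> x \<Longrightarrow> K < \<rho> x"
  using assms unfolding control_fun_def filterlim_at_top_dense eventually_at_top_linorder
  by blast

text \<open>
  The junk alternative \<open>r \<le> k\<close> makes the \<open>LEAST\<close> well defined even when \<open>w\<close> is bounded
  on \<open>A\<close>.
\<close>
lemma control_fun_lower_envelope:
  fixes \<phi> :: "'a \<Rightarrow> 'b \<Rightarrow> nat" and w :: "'a \<Rightarrow> real"
  assumes bounded: "\<And>K. \<exists>B. \<forall>a\<in>A. \<forall>y. \<phi> a y \<le> K \<longrightarrow> w a \<le> B"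
  shows "\<exists>\<rho>. control_fun \<rho> \<and> (\<forall>a\<in>A. \<forall>y. \<rho> (w a) \<le> real (\<phi> a y))"
proof -
  define P where "P = (\<lambda>r k. r \<le> real k \<or> (\<exists>a\<in>A. \<exists>y. r \<le> w a \<and> k = \<phi> a y))"
  define \<rho> where "\<rho> = (\<lambda>r. real (LEAST k. P r k))"
  have P_Least: "P r (LEAST k. P r k)" for r
    by (rule LeastI[of _ "nat \<lceil>r\<rceil>"]) (simp add: P_def real_nat_ceiling_ge)
  have "\<rho> r \<le> \<rho> r'" if "r \<le> r'" for r r'
  proof -
    have "P r (LEAST k. P r' k)" using P_Least[of r'] that unfolding P_def by force
    then show ?thesis unfolding \<rho>_def by (simp add: Least_le)
  qed
  moreover have "filterlim \<rho> at_top at_top"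
    unfolding filterlim_at_top eventually_at_top_linorder
  proof
    fix Z :: real
    obtain B where B: "\<forall>a\<in>A. \<forall>y. \<phi> a y \<le> nat \<lceil>Z\<rceil> \<longrightarrow> w a \<le> B" using bounded by blast
    show "\<exists>N. \<forall>r\<ge>N. Z \<le> \<rho> r"
    proof (intro exI[of _ "max Z (B + 1)"] allI impI)
      fix r assume r: "max Z (B + 1) \<le> r"
      define k where "k = (LEAST k. P r k)"
      have "P r k" unfolding k_def by (rule P_Least)
      then consider "r \<le> real k" | a y where "a \<in> A" "r \<le> w a" "k = \<phi> a y"
        unfolding P_def by blast
      then have "Z \<le> real k"
      proof cases
        case 1
        then show ?thesis using r by simp
      next
        case 2
        then have "\<not> k \<le> nat \<lceil>Z\<rceil>" using B r by force
        then show ?thesis by linarith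
      qed
      then show "Z \<le> \<rho> r" unfolding \<rho>_def k_def .
    qed
  qed
  moreover have "\<rho> (w a) \<le> real (\<phi> a y)" if "a \<in> A" for a y
    using that unfolding \<rho>_def P_def by (auto intro!: Least_le)
  ultimately show ?thesis
    unfolding control_fun_def by (intro exI[of _ \<rho>]) (auto intro!: mono_onI simp: \<rho>_def)
qed

lemma cocycle_one:
  assumes "group \<Delta>" and "group_action \<Gamma> UNIV act" and "cocycle \<Gamma> \<Delta> act \<delta>"
  shows "\<delta> \<one>\<^bsub>\<Gamma>\<^esub> y = \<one>\<^bsub>\<Delta>\<^esub>"
proof -
  interpret H: group \<Delta> by (rule assms(1))
  interpret G: group \<Gamma> using assms(2) unfolding group_action_def group_hom_def by blast
  have one: "\<one>\<^bsub>\<Gamma>\<^esub> \<in> carrier \<Gamma>" by simp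
  have "act \<one>\<^bsub>\<Gamma>\<^esub> y = y" using fun_cong[OF group_action.id_eq_one[OF assms(2)], of y] by simp
  then have "\<delta> \<one>\<^bsub>\<Gamma>\<^esub> y \<otimes>\<^bsub>\<Delta>\<^esub> \<delta> \<one>\<^bsub>\<Gamma>\<^esub> y = \<delta> \<one>\<^bsub>\<Gamma>\<^esub> y \<otimes>\<^bsub>\<Delta>\<^esub> \<one>\<^bsub>\<Delta>\<^esub>"
    using assms(3) one unfolding cocycle_def by (metis G.l_one H.r_one)
  then show ?thesis using assms(3) one H.l_cancel_one unfolding cocycle_def by (metis H.one_closed)
qed

lemma cocycle_translate:
  assumes "group \<Delta>" and act: "group_action \<Gamma> UNIV act" and coc: "cocycle \<Gamma> \<Delta> act \<delta>"
    and g: "g \<in> carrier \<Gamma>" and h: "h \<in> carrier \<Gamma>"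
  shows "\<delta> (inv\<^bsub>\<Gamma>\<^esub> g) y \<otimes>\<^bsub>\<Delta>\<^esub> inv\<^bsub>\<Delta>\<^esub> (\<delta> (inv\<^bsub>\<Gamma>\<^esub> h) y)
         = \<delta> (inv\<^bsub>\<Gamma>\<^esub> g \<otimes>\<^bsub>\<Gamma>\<^esub> h) (act (inv\<^bsub>\<Gamma>\<^esub> h) y)"
proof -
  interpret G: group \<Gamma> using act unfolding group_action_def group_hom_def by blast
  interpret H: group \<Delta> by (rule assms(1))
  have closed: "\<delta> a z \<in> carrier \<Delta>" if "a \<in> carrier \<Gamma>" for a z
    using coc that unfolding cocycle_def by blast
  have rule: "\<delta> a2 (act a1 z) \<otimes>\<^bsub>\<Delta>\<^esub> \<delta> a1 z = \<delta> (a2 \<otimes>\<^bsub>\<Gamma>\<^esub> a1) z"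
    if "a1 \<in> carrier \<Gamma>" "a2 \<in> carrier \<Gamma>" for a1 a2 z
    using coc that unfolding cocycle_def by blast
  define z where "z = act (inv\<^bsub>\<Gamma>\<^esub> h) y"
  have "act h z = y"
    unfolding z_def using h group_action.orbit_sym_aux[OF act, of "inv\<^bsub>\<Gamma>\<^esub> h" y] by simp
  have "\<delta> h z \<otimes>\<^bsub>\<Delta>\<^esub> \<delta> (inv\<^bsub>\<Gamma>\<^esub> h) y = \<one>\<^bsub>\<Delta>\<^esub>"
    using rule[of "inv\<^bsub>\<Gamma>\<^esub> h" h y] h cocycle_one[OF assms(1-3)] unfolding z_def by simp
  then have "inv\<^bsub>\<Delta>\<^esub> (\<delta> (inv\<^bsub>\<Gamma>\<^esub> h) y) = \<delta> h z"
    using h closed by (metis G.inv_closed H.inv_equality)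
  then show ?thesis
    using rule[of h "inv\<^bsub>\<Gamma>\<^esub> g" z] g h \<open>act h z = y\<close> unfolding z_def by simp
qed

lemma cocycle_imp_coarse_embedding:
  assumes "group \<Delta>" and act: "group_action \<Gamma> UNIV act" and coc: "cocycle \<Gamma> \<Delta> act \<delta>"
    and "control_fun \<rho>m" and "control_fun \<rho>p"
    and bounds: "\<forall>\<gamma>\<in>carrier \<Gamma>. \<forall>y.
                  \<rho>m (real (word_length \<Gamma> S \<gamma>)) \<le> real (word_length \<Delta> T (\<delta> \<gamma> y)) \<and>
                  real (word_length \<Delta> T (\<delta> \<gamma> y)) \<le> \<rho>p (real (word_length \<Gamma> S \<gamma>))"
  shows "coarse_embedding \<Gamma> S \<Delta> T (\<lambda>g. inv\<^bsub>\<Delta>\<^esub> (\<delta> (inv\<^bsub>\<Gamma>\<^esub> g) y0))"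
proof -
  interpret G: group \<Gamma> using act unfolding group_action_def group_hom_def by blast
  interpret H: group \<Delta> by (rule assms(1))
  have closed: "\<delta> a z \<in> carrier \<Delta>" if "a \<in> carrier \<Gamma>" for a z
    using coc that unfolding cocycle_def by blast
  define \<phi> where "\<phi> g = inv\<^bsub>\<Delta>\<^esub> (\<delta> (inv\<^bsub>\<Gamma>\<^esub> g) y0)" for g
  have "\<phi> \<in> carrier \<Gamma> \<rightarrow> carrier \<Delta>" unfolding \<phi>_def using closed by simp
  moreover have "\<forall>g\<in>carrier \<Gamma>. \<forall>h\<in>carrier \<Gamma>.
      \<rho>m (real (word_length \<Gamma> S (inv\<^bsub>\<Gamma>\<^esub> g \<otimes>\<^bsub>\<Gamma>\<^esub> h)))
        \<le> real (word_length \<Delta> T (inv\<^bsub>\<Delta>\<^esub> \<phi> g \<otimes>\<^bsub>\<Delta>\<^esub> \<phi> h)) \<and>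
      real (word_length \<Delta> T (inv\<^bsub>\<Delta>\<^esub> \<phi> g \<otimes>\<^bsub>\<Delta>\<^esub> \<phi> h))
        \<le> \<rho>p (real (word_length \<Gamma> S (inv\<^bsub>\<Gamma>\<^esub> g \<otimes>\<^bsub>\<Gamma>\<^esub> h)))"
  proof (intro ballI)
    fix g h assume gh: "g \<in> carrier \<Gamma>" "h \<in> carrier \<Gamma>"
    then have "inv\<^bsub>\<Delta>\<^esub> \<phi> g \<otimes>\<^bsub>\<Delta>\<^esub> \<phi> h
               = \<delta> (inv\<^bsub>\<Gamma>\<^esub> g \<otimes>\<^bsub>\<Gamma>\<^esub> h) (act (inv\<^bsub>\<Gamma>\<^esub> h) y0)"
      unfolding \<phi>_def using cocycle_translate[OF assms(1-3) gh] closed by simp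
    then show "\<rho>m (real (word_length \<Gamma> S (inv\<^bsub>\<Gamma>\<^esub> g \<otimes>\<^bsub>\<Gamma>\<^esub> h)))
        \<le> real (word_length \<Delta> T (inv\<^bsub>\<Delta>\<^esub> \<phi> g \<otimes>\<^bsub>\<Delta>\<^esub> \<phi> h)) \<and>
      real (word_length \<Delta> T (inv\<^bsub>\<Delta>\<^esub> \<phi> g \<otimes>\<^bsub>\<Delta>\<^esub> \<phi> h))
        \<le> \<rho>p (real (word_length \<Gamma> S (inv\<^bsub>\<Gamma>\<^esub> g \<otimes>\<^bsub>\<Gamma>\<^esub> h)))"
      using bounds gh by simp
  qed
  ultimately show ?thesis
    unfolding coarse_embedding_def \<phi>_def[symmetric] using assms(4,5) by blast
qed

locale warped_cone_embedding =
  Y: fg_free_action \<Gamma> S actY + X: fg_free_action \<Delta> T actX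
  for \<Gamma> :: "'g monoid" and S :: "'g set" and actY :: "'g \<Rightarrow> 'y::metric_space \<Rightarrow> 'y"
    and \<Delta> :: "'h monoid" and T :: "'h set" and actX :: "'h \<Rightarrow> 'x::metric_space \<Rightarrow> 'x" +
  fixes f :: "'y \<Rightarrow> 'x" and I :: "'i set" and t \<tau> :: "'i \<Rightarrow> real" and \<sigma>m \<sigma>p :: "real \<Rightarrow> real"
  assumes scales: "t ` I = {0<..}" and target_scales_pos: "\<forall>i\<in>I. 0 < \<tau> i"
    and control_lower: "control_fun \<sigma>m" and control_upper: "control_fun \<sigma>p"
    and warped_bounds: "\<forall>i\<in>I. \<forall>y y'.
           \<sigma>m (warped_dist S actY (t i) y y') \<le> warped_dist T actX (\<tau> i) (f y) (f y') \<and>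
           warped_dist T actX (\<tau> i) (f y) (f y') \<le> \<sigma>p (warped_dist S actY (t i) y y')"
begin

lemma scale_pos: "i \<in> I \<Longrightarrow> 0 < t i"
  using scales by auto

lemma target_scale_pos: "i \<in> I \<Longrightarrow> 0 < \<tau> i"
  using target_scales_pos by auto

lemma lower_chain_dist_bound:
  "i \<in> I \<Longrightarrow> \<sigma>m (chain_dist S actY (t i) y y') \<le> chain_dist T actX (\<tau> i) (f y) (f y')"
  using warped_bounds Y.warped_dist_eq_chain_dist[OF scale_pos]
    X.warped_dist_eq_chain_dist[OF target_scale_pos]
  by metis

lemma upper_chain_dist_bound:
  "i \<in> I \<Longrightarrow> chain_dist T actX (\<tau> i) (f y) (f y') \<le> \<sigma>p (chain_dist S actY (t i) y y')"
  using warped_bounds Y.warped_dist_eq_chain_dist[OF scale_pos]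
    X.warped_dist_eq_chain_dist[OF target_scale_pos]
  by metis

lemma word_length_le_if_chain_dist_le:
  assumes "g \<in> carrier \<Gamma>" and "\<forall>i\<in>I. chain_dist S actY (t i) y (actY g y) \<le> C"
  shows "real (word_length \<Gamma> S g) \<le> C"
proof (rule Y.word_length_le_of_chain_dist_bounded[OF assms(1)], intro allI)
  fix M :: real
  have "max M 0 + 1 \<in> t ` I" using scales by simp
  then obtain i where "i \<in> I" "t i = max M 0 + 1" by force
  then show "\<exists>t'>M. chain_dist S actY t' y (actY g y) \<le> C" using assms(2) by force
qed

text \<open>Bounded scales \<open>\<tau>\<^sub>i\<close> would make the warped distances on \<open>X\<close> bounded, and then \<open>\<sigma>\<^sub>-\<close>
  would bound the word length on all of \<open>\<Gamma>\<close>.\<close>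
lemma target_scales_unbounded:
  assumes "infinite (carrier \<Gamma>)"
  shows "\<exists>i\<in>I. M < \<tau> i"
proof (rule ccontr)
  assume "\<not> ?thesis"
  then have \<tau>_le: "\<forall>i\<in>I. \<tau> i \<le> M" by auto
  obtain D where D: "\<forall>x x'. dist (x::'x) x' \<le> D"
    using compact_imp_bounded[OF X.compact_space] unfolding bounded_two_points by blast
  obtain L where L: "\<And>x. L \<le> x \<Longrightarrow> M * D < \<sigma>m x"
    using control_fun_eventually_gt[OF control_lower] by blast
  obtain g where g: "g \<in> carrier \<Gamma>" "L < real (word_length \<Gamma> S g)"
    using Y.infinite_imp_word_length_unbounded[OF assms] by blast
  have "real (word_length \<Gamma> S g) \<le> L"
  proof (rule word_length_le_if_chain_dist_le[OF g(1)], rule ballI, rule ccontr)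
    fix i y assume i: "i \<in> I" and "\<not> chain_dist S actY (t i) y (actY g y) \<le> L"
    then have "M * D < \<sigma>m (chain_dist S actY (t i) y (actY g y))" using L by auto
    also have "\<dots> \<le> chain_dist T actX (\<tau> i) (f y) (f (actY g y))"
      using lower_chain_dist_bound[OF i] .
    also have "\<dots> \<le> \<tau> i * dist (f y) (f (actY g y))"
      using target_scale_pos[OF i] by (intro chain_dist_le_dist) simp
    also have "\<dots> \<le> M * D"
      using \<tau>_le i D target_scale_pos[OF i] by (meson mult_mono zero_le_dist less_imp_le order_trans)
    finally show False by simp
  qed
  then show False using g(2) by simp
qed

lemma image_orbit_word:
  assumes "infinite (carrier \<Gamma>)" and "g \<in> carrier \<Gamma>"
  shows "\<exists>xs. set xs \<subseteq> T \<and> real (length xs) \<le> \<sigma>p (real (word_length \<Gamma> S g)) \<and>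
           f (actY g y) = actX (X.word_prod xs) (f y)"
proof (rule X.exact_word_of_chain_dist_bounded, rule allI)
  fix M
  obtain i where i: "i \<in> I" "M < \<tau> i" using target_scales_unbounded[OF assms(1)] by blast
  have "chain_dist T actX (\<tau> i) (f y) (f (actY g y)) \<le> \<sigma>p (chain_dist S actY (t i) y (actY g y))"
    using upper_chain_dist_bound[OF i(1)] .
  also have "\<dots> \<le> \<sigma>p (real (word_length \<Gamma> S g))"
    using Y.chain_dist_act_le_word_length assms(2) scale_pos[OF i(1)]
    by (intro control_fun_mono[OF control_upper] chain_dist_nonneg) simp_all
  finally show "\<exists>t'>M. chain_dist T actX t' (f y) (f (actY g y)) \<le> \<sigma>p (real (word_length \<Gamma> S g))"
    using i by blast
qed

definition induced_cocycle :: "'g \<Rightarrow> 'y \<Rightarrow> 'h" where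
  "induced_cocycle g y = (THE d. d \<in> carrier \<Delta> \<and> f (actY g y) = actX d (f y))"

lemma induced_cocycle:
  assumes "infinite (carrier \<Gamma>)" and "g \<in> carrier \<Gamma>"
  shows "induced_cocycle g y \<in> carrier \<Delta>"
    and "f (actY g y) = actX (induced_cocycle g y) (f y)"
    and "real (word_length \<Delta> T (induced_cocycle g y)) \<le> \<sigma>p (real (word_length \<Gamma> S g))"
proof -
  obtain xs where xs: "set xs \<subseteq> T" "real (length xs) \<le> \<sigma>p (real (word_length \<Gamma> S g))"
    "f (actY g y) = actX (X.word_prod xs) (f y)"
    using image_orbit_word[OF assms] by blast
  have closed: "X.word_prod xs \<in> carrier \<Delta>" using X.word_prod_closed[OF xs(1)] .
  have "induced_cocycle g y = X.word_prod xs"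
    unfolding induced_cocycle_def
  proof (rule the_equality)
    fix d assume "d \<in> carrier \<Delta> \<and> f (actY g y) = actX d (f y)"
    then show "d = X.word_prod xs" using X.act_eq_imp_eq closed xs(3) by metis
  qed (use closed xs in simp)
  then show "induced_cocycle g y \<in> carrier \<Delta>" "f (actY g y) = actX (induced_cocycle g y) (f y)"
    and "real (word_length \<Delta> T (induced_cocycle g y)) \<le> \<sigma>p (real (word_length \<Gamma> S g))"
    using closed xs X.word_length_word_prod_le[OF xs(1)] by simp_all
qed

lemma cocycle_induced_cocycle:
  assumes "infinite (carrier \<Gamma>)"
  shows "cocycle \<Gamma> \<Delta> actY induced_cocycle"
  unfolding cocycle_def
proof (intro conjI ballI allI)
  fix g y assume "g \<in> carrier \<Gamma>"
  then show "induced_cocycle g y \<in> carrier \<Delta>" using induced_cocycle(1)[OF assms] by blast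
next
  fix g1 g2 y assume g: "g1 \<in> carrier \<Gamma>" "g2 \<in> carrier \<Gamma>"
  note \<delta> = induced_cocycle[OF assms]
  have "actX (induced_cocycle (g2 \<otimes>\<^bsub>\<Gamma>\<^esub> g1) y) (f y) = f (actY (g2 \<otimes>\<^bsub>\<Gamma>\<^esub> g1) y)"
    using \<delta>(2) g by simp
  also have "\<dots> = f (actY g2 (actY g1 y))"
    using g by (simp add: Y.act_mult)
  also have "\<dots> = actX (induced_cocycle g2 (actY g1 y)) (actX (induced_cocycle g1 y) (f y))"
    using \<delta>(2) g by simp
  also have "\<dots> = actX (induced_cocycle g2 (actY g1 y) \<otimes>\<^bsub>\<Delta>\<^esub> induced_cocycle g1 y) (f y)"
    using \<delta>(1) g by (simp add: X.act_mult)
  finally show "induced_cocycle g2 (actY g1 y) \<otimes>\<^bsub>\<Delta>\<^esub> induced_cocycle g1 y = induced_cocycle (g2 \<otimes>\<^bsub>\<Gamma>\<^esub> g1) y"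
    using X.act_eq_imp_eq \<delta>(1) g by (metis X.m_closed Y.m_closed)
qed

text \<open>Every element other than \<open>\<delta>(\<gamma>, y)\<close> moves \<open>f(y)\<close> elsewhere than \<open>f(\<gamma> y)\<close>, an open
  condition in \<open>y\<close>; only finitely many candidates of bounded length have to be excluded.\<close>
lemma induced_cocycle_locally_constant:
  assumes "infinite (carrier \<Gamma>)" and "continuous_on UNIV f" and g: "\<gamma> \<in> carrier \<Gamma>"
  shows "\<forall>\<^sub>F y' in nhds y. induced_cocycle \<gamma> y' = induced_cocycle \<gamma> y"
proof -
  note \<delta> = induced_cocycle[OF assms(1) g]
  define B where "B = {d \<in> carrier \<Delta>. word_length \<Delta> T d \<le> nat \<lfloor>\<sigma>p (real (word_length \<Gamma> S \<gamma>))\<rfloor>}"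
  have in_B: "induced_cocycle \<gamma> y' \<in> B" for y'
    using \<delta>(1,3)[of y'] unfolding B_def by (auto simp: le_nat_iff le_floor_iff)
  have "\<forall>d\<in>B - {induced_cocycle \<gamma> y}. \<forall>\<^sub>F y' in nhds y. induced_cocycle \<gamma> y' \<noteq> d"
  proof
    fix d assume d: "d \<in> B - {induced_cocycle \<gamma> y}"
    then have "d \<in> carrier \<Delta>" unfolding B_def by auto
    define h where "h y' = dist (f (actY \<gamma> y')) (actX d (f y'))" for y'
    have "continuous_on UNIV (\<lambda>y'. f (actY \<gamma> y'))"
      using assms(2) Y.continuous_on_act[OF g] by (rule continuous_on_compose2) auto
    moreover have "continuous_on UNIV (\<lambda>y'. actX d (f y'))"
      using X.continuous_on_act[OF \<open>d \<in> carrier \<Delta>\<close>] assms(2) by (rule continuous_on_compose2) auto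
    ultimately have "continuous_on UNIV h" unfolding h_def by (rule continuous_on_dist)
    then have "open {y'. 0 < h y'}" by (rule open_Collect_less[OF continuous_on_const])
    moreover have "0 < h y"
      using X.act_eq_imp_eq[OF \<delta>(1) \<open>d \<in> carrier \<Delta>\<close>] \<delta>(2) d unfolding h_def by auto
    moreover have "\<forall>y'\<in>{y'. 0 < h y'}. induced_cocycle \<gamma> y' \<noteq> d"
      using \<delta>(2) unfolding h_def by auto
    ultimately show "\<forall>\<^sub>F y' in nhds y. induced_cocycle \<gamma> y' \<noteq> d"
      unfolding eventually_nhds by (intro exI[of _ "{y'. 0 < h y'}"]) simp
  qed
  moreover have "finite (B - {induced_cocycle \<gamma> y})"
    unfolding B_def using X.finite_word_length_le by simp
  ultimately have "\<forall>\<^sub>F y' in nhds y. \<forall>d\<in>B - {induced_cocycle \<gamma> y}. induced_cocycle \<gamma> y' \<noteq> d"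
    by (intro eventually_ball_finite)
  then show ?thesis by (rule eventually_mono) (use in_B in blast)
qed

lemma word_length_bounded_where_induced_cocycle_short:
  assumes "infinite (carrier \<Gamma>)"
  shows "\<exists>B. \<forall>g\<in>carrier \<Gamma>. \<forall>y. word_length \<Delta> T (induced_cocycle g y) \<le> K \<longrightarrow>
               real (word_length \<Gamma> S g) \<le> B"
proof -
  obtain L where L: "\<And>x. L \<le> x \<Longrightarrow> real K < \<sigma>m x"
    using control_fun_eventually_gt[OF control_lower] by blast
  have "real (word_length \<Gamma> S g) \<le> L"
    if g: "g \<in> carrier \<Gamma>" and K: "word_length \<Delta> T (induced_cocycle g y) \<le> K" for g y
  proof (rule word_length_le_if_chain_dist_le[OF g], rule ballI, rule ccontr)
    fix i assume i: "i \<in> I" and "\<not> chain_dist S actY (t i) y (actY g y) \<le> L"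
    then have "real K < \<sigma>m (chain_dist S actY (t i) y (actY g y))" using L by auto
    also have "\<dots> \<le> chain_dist T actX (\<tau> i) (f y) (f (actY g y))"
      using lower_chain_dist_bound[OF i] .
    also have "\<dots> \<le> real (word_length \<Delta> T (induced_cocycle g y))"
      using induced_cocycle[OF assms g, of y] target_scale_pos[OF i]
      by (metis X.chain_dist_act_le_word_length less_imp_le)
    finally show False using K by simp
  qed
  then show ?thesis by blast
qed

text \<open>For finite \<open>\<Gamma>\<close> the scales \<open>\<tau>\<^sub>i\<close> may stay bounded, and the trivial cocycle does the job.\<close>
lemma exists_cocycle_controlled_by_warping:
  obtains \<delta> :: "'g \<Rightarrow> 'y \<Rightarrow> 'h" where "cocycle \<Gamma> \<Delta> actY \<delta>"
    and "continuous_on UNIV f \<Longrightarrow> \<forall>\<gamma>\<in>carrier \<Gamma>. \<forall>y. \<forall>\<^sub>F y' in nhds y. \<delta> \<gamma> y' = \<delta> \<gamma> y"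
    and "\<forall>\<gamma>\<in>carrier \<Gamma>. \<forall>y. real (word_length \<Delta> T (\<delta> \<gamma> y)) \<le> \<sigma>p (real (word_length \<Gamma> S \<gamma>))"
    and "\<And>K. \<exists>B. \<forall>\<gamma>\<in>carrier \<Gamma>. \<forall>y. word_length \<Delta> T (\<delta> \<gamma> y) \<le> K \<longrightarrow>
                   real (word_length \<Gamma> S \<gamma>) \<le> B"
proof (cases "finite (carrier \<Gamma>)")
  case True
  then have "\<exists>B. \<forall>\<gamma>\<in>carrier \<Gamma>. real (word_length \<Gamma> S \<gamma>) \<le> B"
    by (intro exI[of _ "real (Max (word_length \<Gamma> S ` carrier \<Gamma>))"]) simp
  then show ?thesis
    by (intro that[of "\<lambda>_ _. \<one>\<^bsub>\<Delta>\<^esub>"])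
      (auto simp: cocycle_def X.word_length_one intro!: control_fun_nonneg[OF control_upper])
next
  case False
  show ?thesis
  proof (rule that[of induced_cocycle])
    show "cocycle \<Gamma> \<Delta> actY induced_cocycle" using cocycle_induced_cocycle[OF False] .
  qed (use False induced_cocycle(3) induced_cocycle_locally_constant
         word_length_bounded_where_induced_cocycle_short in auto)
qed

end

theorem corollary4p10:
  fixes \<Gamma> :: "'g monoid" and S :: "'g set"
    and \<Delta> :: "'h monoid" and T :: "'h set"
    and actY :: "'g \<Rightarrow> 'y::metric_space \<Rightarrow> 'y"
    and actX :: "'h \<Rightarrow> 'x::metric_space \<Rightarrow> 'x"
    and f :: "'y \<Rightarrow> 'x"
    and I :: "'i set" and t \<tau> :: "'i \<Rightarrow> real"
    and \<sigma>m \<sigma>p :: "real \<Rightarrow> real"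
  assumes "fg_group \<Gamma> S" and "fg_group \<Delta> T"
    and "compact (UNIV :: 'y set)" and "compact (UNIV :: 'x set)"
    and "free_continuous_action \<Gamma> actY" and "free_continuous_action \<Delta> actX"
    and "t ` I = {0<..}" and "\<forall>i\<in>I. \<tau> i > 0"
    and "control_fun \<sigma>m" and "control_fun \<sigma>p"
    and "\<forall>i\<in>I. \<forall>y y'.
           \<sigma>m (warped_dist S actY (t i) y y') \<le> warped_dist T actX (\<tau> i) (f y) (f y') \<and>
           warped_dist T actX (\<tau> i) (f y) (f y') \<le> \<sigma>p (warped_dist S actY (t i) y y')"
  shows "(\<exists>\<delta> :: 'g \<Rightarrow> 'y \<Rightarrow> 'h. cocycle \<Gamma> \<Delta> actY \<delta> \<and>
            (continuous_on UNIV f \<longrightarrow>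
               (\<forall>\<gamma>\<in>carrier \<Gamma>. \<forall>y. \<forall>\<^sub>F y' in nhds y. \<delta> \<gamma> y' = \<delta> \<gamma> y)) \<and>
            (\<exists>\<rho>m \<rho>p. control_fun \<rho>m \<and> control_fun \<rho>p \<and>
               (\<forall>\<gamma>\<in>carrier \<Gamma>. \<forall>y.
                  \<rho>m (real (word_length \<Gamma> S \<gamma>)) \<le> real (word_length \<Delta> T (\<delta> \<gamma> y)) \<and>
                  real (word_length \<Delta> T (\<delta> \<gamma> y)) \<le> \<rho>p (real (word_length \<Gamma> S \<gamma>)))))
         \<and> (\<exists>\<phi>. coarse_embedding \<Gamma> S \<Delta> T \<phi>)"
proof -
  interpret warped_cone_embedding \<Gamma> S actY \<Delta> T actX f I t \<tau> \<sigma>m \<sigma>p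
    using assms by unfold_locales
  obtain \<delta> where \<delta>: "cocycle \<Gamma> \<Delta> actY \<delta>"
    "continuous_on UNIV f \<Longrightarrow> \<forall>\<gamma>\<in>carrier \<Gamma>. \<forall>y. \<forall>\<^sub>F y' in nhds y. \<delta> \<gamma> y' = \<delta> \<gamma> y"
    "\<forall>\<gamma>\<in>carrier \<Gamma>. \<forall>y. real (word_length \<Delta> T (\<delta> \<gamma> y)) \<le> \<sigma>p (real (word_length \<Gamma> S \<gamma>))"
    "\<And>K. \<exists>B. \<forall>\<gamma>\<in>carrier \<Gamma>. \<forall>y. word_length \<Delta> T (\<delta> \<gamma> y) \<le> K \<longrightarrow>
               real (word_length \<Gamma> S \<gamma>) \<le> B"
    using exists_cocycle_controlled_by_warping by blast
  obtain \<rho>m where "control_fun \<rho>m"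
    "\<forall>\<gamma>\<in>carrier \<Gamma>. \<forall>y. \<rho>m (real (word_length \<Gamma> S \<gamma>)) \<le> real (word_length \<Delta> T (\<delta> \<gamma> y))"
    using control_fun_lower_envelope[OF \<delta>(4)] by blast
  with \<delta>(3) have bounds: "\<forall>\<gamma>\<in>carrier \<Gamma>. \<forall>y.
      \<rho>m (real (word_length \<Gamma> S \<gamma>)) \<le> real (word_length \<Delta> T (\<delta> \<gamma> y)) \<and>
      real (word_length \<Delta> T (\<delta> \<gamma> y)) \<le> \<sigma>p (real (word_length \<Gamma> S \<gamma>))"
    by blast
  have "coarse_embedding \<Gamma> S \<Delta> T (\<lambda>g. inv\<^bsub>\<Delta>\<^esub> (\<delta> (inv\<^bsub>\<Gamma>\<^esub> g) undefined))"
    using cocycle_imp_coarse_embedding[OF X.is_group Y.group_action \<delta>(1) \<open>control_fun \<rho>m\<close>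
        control_upper bounds] .
  then show ?thesis using \<delta>(1,2) bounds \<open>control_fun \<rho>m\<close> control_upper by blast
qed

end
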